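(* Let $(\mathbf F,\prec)$ be an IS-family over a finite set $V$. Let $S_1,S_2\in\mathbf F$ with $S_1\prec S_2$ and let $v\in S_1\setminus S_2$. Let $S^*$ be the witness of $v$ w.r.t. $S_1$. Then $S^*\preceq S_2$.
   Context: Let $V$ be a finite set, $n=|V|$, $\mathbf F$ a family of subsets of $V$ and $\prec$ a strict partial order on $\mathbf F$; $S\preceq S'$ means $S\prec S'$ or $S=S'$. For $S\in\mathbf F$ and $v\in V$, $S$ covers $v$ if there is $S'\in\mathbf F$ with $S'\prec S$ and $v\in S'\setminus S$. $Pred(S)$ is the set of $S'\in\mathbf F$ with $S'\prec S$ such that there is no $S''\in\mathbf F$ with $S'\prec S''\prec S$. The visible set $Vis(S)$ is the set of $v\in V$ such that $v\in S'$ for some $S'\in Pred(S)$ and $v$ is not covered by any element of $Pred(S)$. For $S\in\mathbf F$ and $v\in S$, a witness of $v$ w.r.t. $S$ is a $\prec$-minimal element $S'\in\mathbf F$ with $S\prec S'$ and $v\in S\setminus S'$. $(\mathbf F,\prec)$ is an IS-family if: (SE) there is a unique element $sm(\mathbf F)\in\mathbf F$ with $sm(\mathbf F)\prec S$ for every other $S\in\mathbf F$; (SM) $S_1\prec S_2$ implies $|S_1|<|S_2|$; (SW) for every $S\in\mathbf F$ and $v\in S$ there is at most one witness of $v$ w.r.t. $S$; (TE) if $S_1\prec S_2\prec S_3$ are in $\mathbf F$ and $v\in S_1\setminus S_2$ then $v\in S_1\setminus S_3$; (LVS) for every $S\in\mathbf F$ and $S'\in Pred(S)$, $|S'|\le |Vis(S)|$;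 (DVS) for every $S\in\mathbf F$ with $S\ne sm(\mathbf F)$, $Vis(S)$ is not a subset of $S$; (EC) $sm(\mathbf F)$ can be computed in $O(n^3)$ time, for given $S\in\mathbf F$ and $v\in S$ the witness of $v$ w.r.t. $S$ can be computed (or its nonexistence reported) in $O(n^3)$ time, and $S_1\prec S_2$ can be tested in $O(|S_1|)$ time. *)

theory Defs
  imports Main
begin

definition strict_po_on :: "'a set set \<Rightarrow> ('a set \<Rightarrow> 'a set \<Rightarrow> bool) \<Rightarrow> bool" where
  "strict_po_on F prec \<longleftrightarrow>
     (\<forall>S\<in>F. \<not> prec S S) \<and>
     (\<forall>S1\<in>F. \<forall>S2\<in>F. \<forall>S3\<in>F. prec S1 S2 \<longrightarrow> prec S2 S3 \<longrightarrow> prec S1 S3)"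

definition covers :: "'a set set \<Rightarrow> ('a set \<Rightarrow> 'a set \<Rightarrow> bool) \<Rightarrow> 'a set \<Rightarrow> 'a \<Rightarrow> bool" where
  "covers F prec S v \<longleftrightarrow> (\<exists>S'\<in>F. prec S' S \<and> v \<in> S' - S)"

definition Pred :: "'a set set \<Rightarrow> ('a set \<Rightarrow> 'a set \<Rightarrow> bool) \<Rightarrow> 'a set \<Rightarrow> 'a set set" where
  "Pred F prec S = {S'\<in>F. prec S' S \<and> \<not> (\<exists>S''\<in>F. prec S' S'' \<and> prec S'' S)}"

definition Vis :: "'a set set \<Rightarrow> ('a set \<Rightarrow> 'a set \<Rightarrow> bool) \<Rightarrow> 'a set \<Rightarrow> 'a set" where
  "Vis F prec S = {v. (\<exists>S'\<in>Pred F prec S. v \<in> S') \<and> \<not> (\<exists>S'\<in>Pred F prec S. covers F prec S' v)}"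

definition is_witness :: "'a set set \<Rightarrow> ('a set \<Rightarrow> 'a set \<Rightarrow> bool) \<Rightarrow> 'a set \<Rightarrow> 'a \<Rightarrow> 'a set \<Rightarrow> bool" where
  "is_witness F prec S v W \<longleftrightarrow>
     W \<in> F \<and> prec S W \<and> v \<in> S - W \<and>
     \<not> (\<exists>S''\<in>F. prec S S'' \<and> v \<in> S - S'' \<and> prec S'' W)"

definition sm :: "'a set set \<Rightarrow> ('a set \<Rightarrow> 'a set \<Rightarrow> bool) \<Rightarrow> 'a set" where
  "sm F prec = (THE s. s \<in> F \<and> (\<forall>S\<in>F. S \<noteq> s \<longrightarrow> prec s S))"

definition IS_family :: "'a set \<Rightarrow> 'a set set \<Rightarrow> ('a set \<Rightarrow> 'a set \<Rightarrow> bool) \<Rightarrow> bool" where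
  "IS_family V F prec \<longleftrightarrow>
     finite V \<and> F \<subseteq> Pow V \<and> strict_po_on F prec \<and>
     \<comment> \<open>(SE)\<close>
     (\<exists>!s. s \<in> F \<and> (\<forall>S\<in>F. S \<noteq> s \<longrightarrow> prec s S)) \<and>
     \<comment> \<open>(SM)\<close>
     (\<forall>S1\<in>F. \<forall>S2\<in>F. prec S1 S2 \<longrightarrow> card S1 < card S2) \<and>
     \<comment> \<open>(SW)\<close>
     (\<forall>S\<in>F. \<forall>v\<in>S. \<forall>W1 W2. is_witness F prec S v W1 \<longrightarrow> is_witness F prec S v W2 \<longrightarrow> W1 = W2) \<and>
     \<comment> \<open>(TE)\<close>
     (\<forall>S1\<in>F. \<forall>S2\<in>F. \<forall>S3\<in>F. \<forall>v. prec S1 S2 \<longrightarrow> prec S2 S3 \<longrightarrow> v \<in> S1 - S2 \<longrightarrow> v \<in> S1 - S3) \<and>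
     \<comment> \<open>(LVS)\<close>
     (\<forall>S\<in>F. \<forall>S'\<in>Pred F prec S. card S' \<le> card (Vis F prec S)) \<and>
     \<comment> \<open>(DVS)\<close>
     (\<forall>S\<in>F. S \<noteq> sm F prec \<longrightarrow> \<not> (Vis F prec S \<subseteq> S))"

end

theory Submission
  imports Defs
begin

text \<open>Among the members T of F with S1 \<prec> T and v \<notin> T, one that is minimal below S2
  exists because (SM) makes \<prec> well-founded; it is a witness of v w.r.t. S1, so by (SW)
  it is the witness.\<close>

lemma IS_family_strict_po: "IS_family V F prec \<Longrightarrow> strict_po_on F prec"
  unfolding IS_family_def by (elim conjE)

lemma IS_family_card_less:
  assumes "IS_family V F prec" "A \<in> F" "B \<in> F" "prec A B"
  shows "card A < card B"
proof -
  have "\<forall>S1\<in>F. \<forall>S2\<in>F. prec S1 S2 \<longrightarrow> card S1 < card S2"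
    using assms(1) unfolding IS_family_def by (elim conjE)
  with assms(2-4) show ?thesis by blast
qed

lemma IS_family_witness_unique:
  assumes "IS_family V F prec" "S \<in> F" "v \<in> S"
    and "is_witness F prec S v W1" "is_witness F prec S v W2"
  shows "W1 = W2"
proof -
  have "\<forall>S\<in>F. \<forall>v\<in>S. \<forall>W1 W2. is_witness F prec S v W1 \<longrightarrow> is_witness F prec S v W2 \<longrightarrow> W1 = W2"
    using assms(1) unfolding IS_family_def by (elim conjE)
  with assms(2-5) show ?thesis by blast
qed

lemma exists_witness_below:
  assumes po: "strict_po_on F prec"
    and card_less: "\<And>A B. A \<in> F \<Longrightarrow> B \<in> F \<Longrightarrow> prec A B \<Longrightarrow> card A < card B"
    and "T \<in> F" "prec S T" "v \<in> S - T"
  shows "\<exists>W. is_witness F prec S v W \<and> (prec W T \<or> W = T)"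
  using assms(3-5)
proof (induction "card T" arbitrary: T rule: less_induct)
  case (less T)
  show ?case
  proof (cases "is_witness F prec S v T")
    case True
    then show ?thesis by blast
  next
    case False
    then obtain T' where T': "T' \<in> F" "prec S T'" "v \<in> S - T'" "prec T' T"
      using less.prems unfolding is_witness_def by blast
    have "card T' < card T"
      using card_less T'(1,4) less.prems(1) by blast
    then obtain W where W: "is_witness F prec S v W" "prec W T' \<or> W = T'"
      using less.hyps T'(1-3) by blast
    have "W \<in> F"
      using W(1) unfolding is_witness_def by blast
    then have "prec W T"
      using po W(2) T'(1,4) less.prems(1) unfolding strict_po_on_def by blast
    then show ?thesis
      using W(1) by blast
  qed
qed

theorem proposition2:
  fixes V :: "'a set" and F :: "'a set set" and prec :: "'a set \<Rightarrow> 'a set \<Rightarrow> bool"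
  assumes "IS_family V F prec"
    and "S1 \<in> F" and "S2 \<in> F" and "prec S1 S2"
    and "v \<in> S1 - S2"
    and "is_witness F prec S1 v Sstar"
  shows "prec Sstar S2 \<or> Sstar = S2"
proof -
  obtain W where W: "is_witness F prec S1 v W" "prec W S2 \<or> W = S2"
    using exists_witness_below[OF IS_family_strict_po IS_family_card_less, OF assms(1) assms(1)]
      assms(3-5) by blast
  have "W = Sstar"
    using IS_family_witness_unique[OF assms(1,2) _ W(1) assms(6)] assms(5) by blast
  with W(2) show ?thesis by blast
qed

end
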